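(* Let $\Sigma$ be an alphabet with $|\Sigma|=q$ and let $C\subseteq\Sigma^n$ be a code with $|C|\ge 2$ and minimum Levenshtein distance $d$. Suppose there is a word $v\in\Sigma^N$ that contains every codeword of $C$ as a (not necessarily contiguous) subsequence. If $$\frac{d}{2n} > 1 - \frac{n}{N},$$ then $$|C| \leq \frac{Nd}{Nd - 2(N-n)n}.$$
   Context: For words $x,y$ over $\Sigma$, the Levenshtein distance $d_\mathsf{L}(x,y)$ is the minimum number of single-symbol insertions and deletions needed to transform $x$ into $y$. The minimum Levenshtein distance of a code $C$ is $\min\{d_\mathsf{L}(c_1,c_2): c_1\neq c_2 \in C\}$. *)

theory Defs
  imports Complex_Main "HOL-Library.Sublist"
begin

definition indel_step :: "'a list \<Rightarrow> 'a list \<Rightarrow> bool" where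
  "indel_step x y \<longleftrightarrow> (\<exists>u w a. (x = u @ a # w \<and> y = u @ w) \<or> (x = u @ w \<and> y = u @ a # w))"

definition ldist :: "'a list \<Rightarrow> 'a list \<Rightarrow> nat" where
  "ldist x y = (LEAST k. (indel_step ^^ k) x y)"

definition min_ldist :: "'a list set \<Rightarrow> nat" where
  "min_ldist C = Min {ldist c1 c2 | c1 c2. c1 \<in> C \<and> c2 \<in> C \<and> c1 \<noteq> c2}"

end

theory Submission
  imports Defs "HOL-Analysis.Convex"
begin

text \<open>Realise every codeword c as the restriction of the supersequence v to an n-element set
S c of positions. Two distinct codewords c, c' share the subsequence read off at the common
positions, so deleting the other symbols of c and inserting those of c' shows
d \<le> 2 (n - |S c \<inter> S c'|): the position sets pairwise meet in at most n - d/2 elements.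
Counting, for each of the N positions of v, how many position sets contain it, and applying
Cauchy-Schwarz to these counts yields (|C| n)^2 \<le> N |C| (n + (|C| - 1)(n - d/2)), which
rearranges to the claimed bound.\<close>

lemma indel_step_sym: "indel_step x y \<longleftrightarrow> indel_step y x"
  unfolding indel_step_def by blast

lemma indel_path_sym: "(indel_step ^^ k) x y \<Longrightarrow> (indel_step ^^ k) y x"
proof (induction k arbitrary: y)
  case (Suc k)
  then obtain z where "(indel_step ^^ k) x z" "indel_step z y" by auto
  then show ?case using Suc.IH indel_step_sym by (meson relpowp_Suc_I2)
qed simp

lemma indel_step_Cons: "indel_step x y \<Longrightarrow> indel_step (a # x) (a # y)"
  unfolding indel_step_def by (metis append_Cons)

lemma indel_path_Cons: "(indel_step ^^ k) x y \<Longrightarrow> (indel_step ^^ k) (a # x) (a # y)"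
proof (induction k arbitrary: y)
  case (Suc k)
  then obtain z where "(indel_step ^^ k) x z" "indel_step z y" by auto
  then show ?case using Suc.IH indel_step_Cons by (meson relpowp_Suc_I)
qed simp

lemma indel_path_subseq: "subseq w x \<Longrightarrow> (indel_step ^^ (length x - length w)) x w"
proof (induction x arbitrary: w)
  case Nil
  then show ?case by (auto dest: list_emb_Nil2)
next
  case (Cons a x)
  from Cons.prems consider "subseq w x" | w' where "w = a # w'" "subseq w' x"
    by (cases w) (auto split: if_splits)
  then show ?case
  proof cases
    case 1
    have "indel_step (a # x) x"
      unfolding indel_step_def by (metis append_Nil)
    with Cons.IH[OF 1] have "(indel_step ^^ Suc (length x - length w)) (a # x) w"
      by (meson relpowp_Suc_I2)
    moreover have "length w \<le> length x"
      using 1 list_emb_length by blast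
    ultimately show ?thesis by (simp add: Suc_diff_le)
  next
    case 2
    then show ?thesis using indel_path_Cons[OF Cons.IH[OF 2(2)]] by simp
  qed
qed

lemma ldist_le_common_subseq:
  assumes "subseq w x" "subseq w y"
  shows "ldist x y \<le> (length x - length w) + (length y - length w)"
proof -
  have "(indel_step ^^ ((length x - length w) + (length y - length w))) x y"
    using indel_path_subseq[OF assms(1)] indel_path_sym[OF indel_path_subseq[OF assms(2)]]
    by (auto simp: relpowp_add)
  then show ?thesis
    unfolding ldist_def by (rule Least_le)
qed

lemma min_ldist_le_ldist:
  assumes "finite C" "c \<in> C" "c' \<in> C" "c \<noteq> c'"
  shows "min_ldist C \<le> ldist c c'"
proof -
  have "{ldist c1 c2 | c1 c2. c1 \<in> C \<and> c2 \<in> C \<and> c1 \<noteq> c2} \<subseteq> case_prod ldist ` (C \<times> C)"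
    by auto
  then have "finite {ldist c1 c2 | c1 c2. c1 \<in> C \<and> c2 \<in> C \<and> c1 \<noteq> c2}"
    using assms(1) by (meson finite_SigmaI finite_imageI finite_subset)
  then show ?thesis
    unfolding min_ldist_def by (rule Min_le) (use assms in blast)
qed

lemma subseq_nths_mono: "A \<subseteq> B \<Longrightarrow> subseq (nths xs A) (nths xs B)"
proof -
  assume "A \<subseteq> B"
  then have "filter (\<lambda>p. snd p \<in> A) (zip xs [0..<length xs]) =
     filter (\<lambda>p. snd p \<in> A) (filter (\<lambda>p. snd p \<in> B) (zip xs [0..<length xs]))"
    by (auto simp: filter_filter intro!: filter_cong)
  then show ?thesis
    unfolding nths_def by (metis subseq_filter_left subseq_map)
qed

lemma nths_Int_lessThan_length: "nths xs (I \<inter> {..<length xs}) = nths xs I"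
  unfolding nths_def
  by (auto intro!: arg_cong[where f = "map fst"] filter_cong dest: set_zip_rightD)

lemma length_nths_subset: "I \<subseteq> {..<length xs} \<Longrightarrow> length (nths xs I) = card I"
proof -
  assume "I \<subseteq> {..<length xs}"
  then have "{i. i < length xs \<and> i \<in> I} = I" by auto
  then show ?thesis by (simp add: length_nths)
qed

lemma subseq_iff_nths_positions:
  "subseq w v \<longleftrightarrow> (\<exists>I \<subseteq> {..<length v}. w = nths v I)"
proof
  assume "subseq w v"
  then obtain I where "w = nths v I"
    using subseq_conv_nths by blast
  then show "\<exists>I \<subseteq> {..<length v}. w = nths v I"
    by (metis inf_le2 nths_Int_lessThan_length)
qed (use subseq_conv_nths in blast)

lemma ldist_nths_card_Int_le:
  assumes "I \<subseteq> {..<length v}" "J \<subseteq> {..<length v}" "card I = n" "card J = n"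
  shows "2 * card (I \<inter> J) + ldist (nths v I) (nths v J) \<le> 2 * n"
proof -
  have "length (nths v (I \<inter> J)) = card (I \<inter> J)"
    using assms(1) by (intro length_nths_subset) auto
  then have "ldist (nths v I) (nths v J) \<le> 2 * (n - card (I \<inter> J))"
    using ldist_le_common_subseq[of "nths v (I \<inter> J)"] subseq_nths_mono[of "I \<inter> J"]
      length_nths_subset[OF assms(1)] length_nths_subset[OF assms(2)] assms(3,4)
    by (metis inf_le1 inf_le2 mult_2)
  moreover have "card (I \<inter> J) \<le> n"
    using card_mono[OF finite_subset[OF assms(1) finite_lessThan] Int_lower1] assms(3) by simp
  ultimately show ?thesis
    by linarith
qed

lemma uniform_family_Cauchy_Schwarz:
  fixes S :: "'i \<Rightarrow> 'u set" and t :: real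
  assumes "finite U" "finite I"
    and "\<And>i. i \<in> I \<Longrightarrow> S i \<subseteq> U" "\<And>i. i \<in> I \<Longrightarrow> card (S i) = k"
    and "\<And>i j. i \<in> I \<Longrightarrow> j \<in> I \<Longrightarrow> i \<noteq> j \<Longrightarrow> card (S i \<inter> S j) \<le> t"
  shows "(real (card I) * k)\<^sup>2 \<le> real (card U) * (real (card I) * (k + (real (card I) - 1) * t))"
proof -
  define R where "R x = (\<Sum>i\<in>I. of_bool (x \<in> S i) :: real)" for x
  have sum_Int: "(\<Sum>x\<in>U. of_bool (x \<in> S i) * of_bool (x \<in> S j) :: real) = card (S i \<inter> S j)"
    if "i \<in> I" for i j
  proof -
    have "U \<inter> S i \<inter> S j = S i \<inter> S j"
      using assms(3)[OF that] by blast
    then show ?thesis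
      using assms(1) by simp
  qed
  have "(\<Sum>x\<in>U. R x) = (\<Sum>i\<in>I. \<Sum>x\<in>U. of_bool (x \<in> S i))"
    unfolding R_def by (rule sum.swap)
  also have "\<dots> = (\<Sum>i\<in>I. real k)"
  proof (rule sum.cong[OF refl])
    fix i assume "i \<in> I"
    then have "U \<inter> {x. x \<in> S i} = S i"
      using assms(3) by blast
    then show "(\<Sum>x\<in>U. of_bool (x \<in> S i)) = real k"
      using assms(1) assms(4)[OF \<open>i \<in> I\<close>] by simp
  qed
  finally have sum_R: "(\<Sum>x\<in>U. R x) = real (card I) * k"
    by simp
  have row: "(\<Sum>j\<in>I. real (card (S i \<inter> S j))) \<le> k + (real (card I) - 1) * t" if "i \<in> I" for i
  proof -
    have "(\<Sum>j\<in>I. real (card (S i \<inter> S j)))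
        = real (card (S i \<inter> S i)) + (\<Sum>j\<in>I - {i}. real (card (S i \<inter> S j)))"
      using sum.remove[OF assms(2) that] by blast
    also have "\<dots> \<le> k + real (card (I - {i})) * t"
      using sum_bounded_above[of "I - {i}" "\<lambda>j. real (card (S i \<inter> S j))" t] assms(4,5) that
      by auto
    also have "real (card (I - {i})) = real (card I) - 1"
      using card.remove[OF assms(2) that] by simp
    finally show ?thesis .
  qed
  have "(\<Sum>x\<in>U. (R x)\<^sup>2) = (\<Sum>x\<in>U. \<Sum>i\<in>I. \<Sum>j\<in>I. of_bool (x \<in> S i) * of_bool (x \<in> S j))"
    unfolding R_def power2_eq_square sum_product ..
  also have "\<dots> = (\<Sum>i\<in>I. \<Sum>x\<in>U. \<Sum>j\<in>I. of_bool (x \<in> S i) * of_bool (x \<in> S j))"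
    by (rule sum.swap)
  also have "\<dots> = (\<Sum>i\<in>I. \<Sum>j\<in>I. \<Sum>x\<in>U. of_bool (x \<in> S i) * of_bool (x \<in> S j))"
    by (intro sum.cong refl sum.swap)
  also have "\<dots> = (\<Sum>i\<in>I. \<Sum>j\<in>I. real (card (S i \<inter> S j)))"
    using sum_Int by simp
  also have "\<dots> \<le> real (card I) * (k + (real (card I) - 1) * t)"
    using sum_mono[OF row] by simp
  finally have sum_R2: "(\<Sum>x\<in>U. (R x)\<^sup>2) \<le> real (card I) * (k + (real (card I) - 1) * t)" .
  have "(real (card I) * k)\<^sup>2 \<le> (\<Sum>x\<in>U. (R x)\<^sup>2) * card U"
    using sum_squared_le_sum_of_squares[of R U] by (simp add: sum_R)
  also have "\<dots> \<le> real (card I) * (k + (real (card I) - 1) * t) * card U"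
    using sum_R2 by (rule mult_right_mono) simp
  finally show ?thesis
    by (simp add: mult.commute)
qed

lemma Cauchy_Schwarz_bound_rearranged:
  fixes M n N d :: real
  assumes "(M * n)\<^sup>2 \<le> N * (M * (n + (M - 1) * (n - d / 2)))"
    and "M > 0" and "N * d - 2 * (N - n) * n > 0"
  shows "M \<le> N * d / (N * d - 2 * (N - n) * n)"
proof -
  have "M * (M * n\<^sup>2) \<le> M * (N * (n + (M - 1) * (n - d / 2)))"
    using assms(1) by (simp add: power2_eq_square algebra_simps)
  then have "M * n\<^sup>2 \<le> N * (n + (M - 1) * (n - d / 2))"
    using assms(2) by simp
  then have "M * (N * d - 2 * (N - n) * n) \<le> N * d"
    by (simp add: field_simps power2_eq_square)
  then show ?thesis
    using assms(3) by (simp add: pos_le_divide_eq)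
qed

theorem mainTheorem7:
  fixes Sigma :: "'a set" and q n N d :: nat and C :: "'a list set" and v :: "'a list"
  assumes "finite Sigma" and "card Sigma = q"
    and "C \<subseteq> {w. set w \<subseteq> Sigma \<and> length w = n}"
    and "card C \<ge> 2"
    and "d = min_ldist C"
    and "set v \<subseteq> Sigma" and "length v = N"
    and "\<forall>c\<in>C. subseq c v"
    and "real d / (2 * real n) > 1 - real n / real N"
  shows "real (card C) \<le> real N * real d / (real N * real d - 2 * (real N - real n) * real n)"
proof -
  have "finite C"
    using assms(4) card.infinite by fastforce
  have "\<forall>c\<in>C. \<exists>I \<subseteq> {..<N}. c = nths v I"
    using assms(7,8) subseq_iff_nths_positions by blast
  then obtain S where S: "\<And>c. c \<in> C \<Longrightarrow> S c \<subseteq> {..<N} \<and> c = nths v (S c)"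
    by metis
  have card_S: "card (S c) = n" if "c \<in> C" for c
    using S[OF that] length_nths_subset[of "S c" v] assms(3,7) that by auto
  have Int_S: "card (S c \<inter> S c') \<le> real n - real d / 2" if "c \<in> C" "c' \<in> C" "c \<noteq> c'" for c c'
    using ldist_nths_card_Int_le[of "S c" v "S c'" n] min_ldist_le_ldist[OF \<open>finite C\<close> that]
      S[OF that(1)] S[OF that(2)] card_S[OF that(1)] card_S[OF that(2)] assms(5,7) by force
  have CS: "(real (card C) * n)\<^sup>2
      \<le> real N * (real (card C) * (n + (real (card C) - 1) * (real n - real d / 2)))"
    using uniform_family_Cauchy_Schwarz[of "{..<N}" C S n] \<open>finite C\<close> S card_S Int_S by simp
  obtain c where "c \<in> C"
    using assms(4) by force
  then have "n \<le> N"
    using card_S S card_mono[OF finite_lessThan, of "S c" N] by fastforce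
  moreover have "0 < n"
    using assms(9) by (cases "n = 0") simp_all
  ultimately have "real N * real d - 2 * (real N - real n) * real n > 0"
    using assms(9) by (simp add: field_simps)
  then show ?thesis
    using Cauchy_Schwarz_bound_rearranged[OF CS] assms(4) by simp
qed

end
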